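(* Let $\Theta$ be a branch of a tableau of $\mathbf{TAB}_{\mathbf{IB}}$. Suppose $@_i\varphi\in\Theta$ is a quasi-subformula of the root formula of $\Theta$ and $i\in\mathrm{dom}(v_\Theta)$. Then $@_{v_\Theta(i)}\varphi\in\Theta$.
   Context: Hybrid language: fix disjoint countably infinite sets $\mathbf{Prop}$ (propositional variables) and $\mathbf{Nom}$ (nominals). Formulas: $\varphi ::= p \mid i \mid \neg\varphi \mid \varphi\land\varphi \mid \Diamond\varphi \mid @_i\varphi$ with $p\in\mathbf{Prop}$, $i\in\mathbf{Nom}$; $\Box\varphi$ abbreviates $\neg\Diamond\neg\varphi$. Tableau calculus $\mathbf{TAB}_{\mathbf{IB}}$. A tableau is a well-founded tree whose nodes are formulas of the form $@_i\varphi$; its root is a formula $@_i\varphi$ (the root formula) where $i$ does not occur in $\varphi$. A branch is a maximal path; $\varphi\in\Theta$ means $\varphi$ occurs on branch $\Theta$. Each branch is extended by applying the rules below to its formulas as often as possible, except that no further formula is added to a branch once either (i) every new formula generated by applying any rule already occurs on the branch, or (ii) the branch is closed, i.e. contains $@_i\varphi$ and $@_i\neg\varphi$ for some formula $\varphi$ and nominal $i$. An accessibility formula is a formula $@_i\Diamond j$ added by rule $[\Diamond]$ (with $j$ the new nominal). Rules (premises already on the branch; conclusions added to it): [$\neg\neg$] from $@_i\neg\neg\varphi$ add $@_i\varphi$; [$\land$] from $@_i(\varphi\land\psi)$ add $@_i\varphi$ and $@_i\psi$; [$\neg\land$] from $@_i\neg(\varphi\land\psi)$ split the branch into one extended by $@_i\neg\varphi$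 and one extended by $@_i\neg\psi$; [$\Diamond$] from $@_i\Diamond\varphi$, which is not an accessibility formula, add $@_i\Diamond j$ and $@_j\varphi$ where $j$ is a nominal not occurring on the branch; this rule is applied at most once per formula, and only if $i$ is a quasi-urfather on the branch (defined below); [$\neg\Diamond$] from $@_i\neg\Diamond\varphi$ and $@_i\Diamond j$ add $@_j\neg\varphi$; [$\Box_{sym}$] from $@_i\Box\varphi$ and $@_j\Diamond i$ add $@_j\varphi$; [$@$] from $@_i@_j\varphi$ add $@_j\varphi$; [$\neg@$] from $@_i\neg@_j\varphi$ add $@_j\neg\varphi$; [$Id$] from $@_i\varphi$, which is not an accessibility formula, and $@_i j$ add $@_j\varphi$; [$Ref$] for any nominal $i$ occurring on the branch add $@_i i$; ($\mathcal{I}$) for any nominal $i$ occurring on the branch add $@_i\neg\Diamond i$. Auxiliary notions for a branch $\Theta$. $@_i\varphi$ is a quasi-subformula of $@_j\psi$ if $\varphi$ is a subformula of $\psi$, or $\varphi=\neg\chi$ with $\chi$ a subformula of $\psi$. For a nominal $i$ occurring in $\Theta$, $T^\Theta(i)=\{\varphi \mid @_i\varphi\in\Theta$ and $@_i\varphi$ is a quasi-subformula of the root formula$\}$. Nominals $i,j$ are twins if $T^\Theta(i)=T^\Theta(j)$. $i\prec_\Theta j$ if $j$ was introduced by applying $[\Diamond]$ to a formula $@_i\Diamond\varphi$; $\prec_\Theta^*$ is its reflexive transitive closure. A nominal $i$ is a quasi-urfather on $\Theta$ if there are no twins $j\neq k$ with $j\prec_\Theta^* i$ and $k\prec_\Theta^*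 i$. The identity urfather $v_\Theta(i)$ of a nominal $i$ occurring in $\Theta$ is the earliest introduced nominal $j$ on $\Theta$ such that $j$ is a twin of $i$ and $j$ is a quasi-urfather; it may fail to exist, and $\mathrm{dom}(v_\Theta)$ denotes the set of nominals $i$ for which it exists. *)

theory Defs
  imports Main
begin

datatype fm = Pro nat | Nom nat | Neg fm | Con fm fm | Dia fm | At nat fm

abbreviation Box :: "fm \<Rightarrow> fm" where "Box \<phi> \<equiv> Neg (Dia (Neg \<phi>))"

fun noms_fm :: "fm \<Rightarrow> nat set" where
  "noms_fm (Pro p) = {}"
| "noms_fm (Nom i) = {i}"
| "noms_fm (Neg \<phi>) = noms_fm \<phi>"
| "noms_fm (Con \<phi> \<psi>) = noms_fm \<phi> \<union> noms_fm \<psi>"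
| "noms_fm (Dia \<phi>) = noms_fm \<phi>"
| "noms_fm (At i \<phi>) = insert i (noms_fm \<phi>)"

fun subfms :: "fm \<Rightarrow> fm set" where
  "subfms (Pro p) = {Pro p}"
| "subfms (Nom i) = {Nom i}"
| "subfms (Neg \<phi>) = insert (Neg \<phi>) (subfms \<phi>)"
| "subfms (Con \<phi> \<psi>) = insert (Con \<phi> \<psi>) (subfms \<phi> \<union> subfms \<psi>)"
| "subfms (Dia \<phi>) = insert (Dia \<phi>) (subfms \<phi>)"
| "subfms (At i \<phi>) = insert (At i \<phi>) (subfms \<phi>)"

text \<open>A node @_i phi of a branch is an entry (i, phi, acc). acc = Some psi marks an
  accessibility formula @_i<>j added by rule [<>] applied to @_i<>psi; acc = None for
  every other node. A branch is the list of its nodes in the order they were added.\<close>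

type_synonym entry = "nat \<times> fm \<times> fm option"
type_synonym branch = "entry list"

definition fms :: "branch \<Rightarrow> (nat \<times> fm) set" where
  "fms \<Theta> = (\<lambda>(i, \<phi>, a). (i, \<phi>)) ` set \<Theta>"

definition noms_entry :: "entry \<Rightarrow> nat set" where
  "noms_entry e = (case e of (i, \<phi>, a) \<Rightarrow> insert i (noms_fm \<phi>))"

definition noms_br :: "branch \<Rightarrow> nat set" where
  "noms_br \<Theta> = (\<Union>e\<in>set \<Theta>. noms_entry e)"

definition root_fm :: "branch \<Rightarrow> fm" where
  "root_fm \<Theta> = fst (snd (hd \<Theta>))"

text \<open>@_i phi is a quasi-subformula of @_j psi (independent of i, j).\<close>
definition qsub :: "fm \<Rightarrow> fm \<Rightarrow> bool" where
  "qsub \<phi> \<psi> \<longleftrightarrow> \<phi> \<in> subfms \<psi> \<or> (\<exists>\<chi>. \<phi> = Neg \<chi> \<and> \<chi> \<in> subfms \<psi>)"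

definition T_br :: "branch \<Rightarrow> nat \<Rightarrow> fm set" where
  "T_br \<Theta> i = {\<phi>. (i, \<phi>) \<in> fms \<Theta> \<and> qsub \<phi> (root_fm \<Theta>)}"

definition twins :: "branch \<Rightarrow> nat \<Rightarrow> nat \<Rightarrow> bool" where
  "twins \<Theta> i j \<longleftrightarrow> i \<in> noms_br \<Theta> \<and> j \<in> noms_br \<Theta> \<and> T_br \<Theta> i = T_br \<Theta> j"

text \<open>i \<prec> j iff j was introduced by applying [<>] to some @_i<>psi, i.e. the
  accessibility formula @_i<>j is on the branch.\<close>
definition prec :: "branch \<Rightarrow> nat \<Rightarrow> nat \<Rightarrow> bool" where
  "prec \<Theta> i j \<longleftrightarrow> (\<exists>\<psi>. (i, Dia (Nom j), Some \<psi>) \<in> set \<Theta>)"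

definition quasi_urfather :: "branch \<Rightarrow> nat \<Rightarrow> bool" where
  "quasi_urfather \<Theta> i \<longleftrightarrow>
     \<not> (\<exists>j k. j \<noteq> k \<and> twins \<Theta> j k \<and> (prec \<Theta>)\<^sup>*\<^sup>* j i \<and> (prec \<Theta>)\<^sup>*\<^sup>* k i)"

text \<open>Position of the node in which nominal i first occurs (time of introduction).\<close>
definition intro_pos :: "branch \<Rightarrow> nat \<Rightarrow> nat" where
  "intro_pos \<Theta> i = (LEAST n. n < length \<Theta> \<and> i \<in> noms_entry (\<Theta> ! n))"

text \<open>j is the identity urfather of i: the earliest introduced nominal that is a twin
  of i and a quasi-urfather (ties, which can only occur among nominals of the root,
  are broken by the numeric order of nominals).\<close>
definition is_v :: "branch \<Rightarrow> nat \<Rightarrow> nat \<Rightarrow> bool" where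
  "is_v \<Theta> i j \<longleftrightarrow> twins \<Theta> i j \<and> quasi_urfather \<Theta> j \<and>
     (\<forall>k. twins \<Theta> i k \<and> quasi_urfather \<Theta> k \<longrightarrow>
        intro_pos \<Theta> j < intro_pos \<Theta> k \<or> (intro_pos \<Theta> j = intro_pos \<Theta> k \<and> j \<le> k))"

definition v_br :: "branch \<Rightarrow> nat \<Rightarrow> nat option" where
  "v_br \<Theta> i = (if \<exists>j. is_v \<Theta> i j then Some (THE j. is_v \<Theta> i j) else None)"

definition dia_applied :: "branch \<Rightarrow> nat \<Rightarrow> fm \<Rightarrow> bool" where
  "dia_applied \<Theta> i \<phi> \<longleftrightarrow> (\<exists>j. (i, Dia (Nom j), Some \<phi>) \<in> set \<Theta>)"

text \<open>rule Theta Cs: some rule is applicable on Theta; Cs lists the alternative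
  extensions (one alternative except for the branching rule [~/\]).\<close>
inductive rule :: "branch \<Rightarrow> entry list list \<Rightarrow> bool" for \<Theta> :: branch where
  negneg: "(i, Neg (Neg \<phi>)) \<in> fms \<Theta> \<Longrightarrow> rule \<Theta> [[(i, \<phi>, None)]]"
| conj: "(i, Con \<phi> \<psi>) \<in> fms \<Theta> \<Longrightarrow> rule \<Theta> [[(i, \<phi>, None), (i, \<psi>, None)]]"
| nconj: "(i, Neg (Con \<phi> \<psi>)) \<in> fms \<Theta> \<Longrightarrow> rule \<Theta> [[(i, Neg \<phi>, None)], [(i, Neg \<psi>, None)]]"
| dia: "(i, Dia \<phi>, None) \<in> set \<Theta> \<Longrightarrow> \<not> dia_applied \<Theta> i \<phi> \<Longrightarrow> quasi_urfather \<Theta> i \<Longrightarrow>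
        j \<notin> noms_br \<Theta> \<Longrightarrow> rule \<Theta> [[(i, Dia (Nom j), Some \<phi>), (j, \<phi>, None)]]"
| ndia: "(i, Neg (Dia \<phi>)) \<in> fms \<Theta> \<Longrightarrow> (i, Dia (Nom j)) \<in> fms \<Theta> \<Longrightarrow>
        rule \<Theta> [[(j, Neg \<phi>, None)]]"
| box_sym: "(i, Box \<phi>) \<in> fms \<Theta> \<Longrightarrow> (j, Dia (Nom i)) \<in> fms \<Theta> \<Longrightarrow>
        rule \<Theta> [[(j, \<phi>, None)]]"
| at: "(i, At j \<phi>) \<in> fms \<Theta> \<Longrightarrow> rule \<Theta> [[(j, \<phi>, None)]]"
| nat: "(i, Neg (At j \<phi>)) \<in> fms \<Theta> \<Longrightarrow> rule \<Theta> [[(j, Neg \<phi>, None)]]"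
| ident: "(i, \<phi>, None) \<in> set \<Theta> \<Longrightarrow> (i, Nom j) \<in> fms \<Theta> \<Longrightarrow> rule \<Theta> [[(j, \<phi>, None)]]"
| refl: "i \<in> noms_br \<Theta> \<Longrightarrow> rule \<Theta> [[(i, Nom i, None)]]"
| irrefl: "i \<in> noms_br \<Theta> \<Longrightarrow> rule \<Theta> [[(i, Neg (Dia (Nom i)), None)]]"

definition closed :: "branch \<Rightarrow> bool" where
  "closed \<Theta> \<longleftrightarrow> (\<exists>i \<phi>. (i, \<phi>) \<in> fms \<Theta> \<and> (i, Neg \<phi>) \<in> fms \<Theta>)"

definition saturated :: "branch \<Rightarrow> bool" where
  "saturated \<Theta> \<longleftrightarrow> (\<forall>Cs. rule \<Theta> Cs \<longrightarrow>
      (\<exists>C\<in>set Cs. \<forall>(i, \<phi>, a)\<in>set C. (i, \<phi>) \<in> fms \<Theta>))"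

text \<open>Initial segments of branches of tableaux.\<close>
inductive tab_path :: "branch \<Rightarrow> bool" where
  root: "i \<notin> noms_fm \<phi> \<Longrightarrow> tab_path [(i, \<phi>, None)]"
| ext: "tab_path \<Theta> \<Longrightarrow> \<not> closed \<Theta> \<Longrightarrow> \<not> saturated \<Theta> \<Longrightarrow> rule \<Theta> Cs \<Longrightarrow> C \<in> set Cs \<Longrightarrow>
        tab_path (\<Theta> @ C)"

definition is_branch :: "branch \<Rightarrow> bool" where
  "is_branch \<Theta> \<longleftrightarrow> tab_path \<Theta> \<and> (closed \<Theta> \<or> saturated \<Theta>)"

end

theory Submission
  imports Defs
begin

lemma is_v_unique:
  assumes "is_v \<Theta> i j" and "is_v \<Theta> i k"
  shows "j = k"
proof -
  have "intro_pos \<Theta> j < intro_pos \<Theta> k \<or> (intro_pos \<Theta> j = intro_pos \<Theta> k \<and> j \<le> k)"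
    and "intro_pos \<Theta> k < intro_pos \<Theta> j \<or> (intro_pos \<Theta> k = intro_pos \<Theta> j \<and> k \<le> j)"
    using assms unfolding is_v_def by blast+
  then show ?thesis by linarith
qed

lemma is_v_the_v_br:
  assumes "i \<in> dom (v_br \<Theta>)"
  shows "is_v \<Theta> i (the (v_br \<Theta> i))"
proof -
  from assms obtain j where j: "is_v \<Theta> i j"
    unfolding v_br_def by (auto split: if_splits)
  have "is_v \<Theta> i (THE j. is_v \<Theta> i j)"
    using j by (rule theI) (use j is_v_unique in blast)
  then show ?thesis
    unfolding v_br_def by auto
qed

lemma twins_share_quasi_subformulas:
  assumes "twins \<Theta> i j" and "(i, \<phi>) \<in> fms \<Theta>" and "qsub \<phi> (root_fm \<Theta>)"
  shows "(j, \<phi>) \<in> fms \<Theta>"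
  using assms unfolding twins_def T_br_def by blast

theorem lemma7:
  assumes "is_branch \<Theta>"
    and "(i, \<phi>) \<in> fms \<Theta>"
    and "qsub \<phi> (root_fm \<Theta>)"
    and "i \<in> dom (v_br \<Theta>)"
  shows "(the (v_br \<Theta> i), \<phi>) \<in> fms \<Theta>"
proof -
  have "twins \<Theta> i (the (v_br \<Theta> i))"
    using is_v_the_v_br[OF assms(4)] unfolding is_v_def by blast
  then show ?thesis
    using twins_share_quasi_subformulas assms(2,3) by blast
qed

end
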